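(* Let $X$ be a Hausdorff topological space. Then $X$ is locally compact if and only if its symmetric pseudogroup $\mathscr{I}(X)$ is continuous.
   Context: The symmetric pseudogroup $\mathscr{I}(X)$ is the set of all homeomorphisms $f:U\to V$ between open subsets $U=\mathrm{dom}(f)$ and $V$ of $X$, with product: for $f:U\to V$ and $f_1:U_1\to V_1$, $f_1\cdot f : x\mapsto f_1(f(x))$ defined on $f^{-1}(V\cap U_1)$ with values in $f_1(V\cap U_1)$; it is an inverse semigroup with $f^*=f^{-1}$. Its intrinsic order is $f\leqslant g$ iff $f=g|_U$ for some open $U\subseteq\mathrm{dom}(g)$. In a poset, $x$ is way-below $y$ ($x\ll y$) if for every directed subset $D$ (nonempty, any two elements having an upper bound in $D$) that has a supremum with $y\leqslant\sup D$, there is $d\in D$ with $x\leqslant d$. A poset is continuous if for every $s$ the set $\{t: t\ll s\}$ is directed with supremum $s$; $\mathscr{I}(X)$ is continuous if it is so for its intrinsic order. *)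

theory Defs
  imports "HOL-Analysis.Analysis"
begin

definition sym_pseudogroup :: "'a topology \<Rightarrow> ('a \<rightharpoonup> 'a) set" where
  "sym_pseudogroup X = {f. openin X (dom f) \<and> openin X (ran f) \<and>
     homeomorphic_map (subtopology X (dom f)) (subtopology X (ran f)) (\<lambda>x. the (f x))}"

definition sym_pg_mult :: "('a \<rightharpoonup> 'a) \<Rightarrow> ('a \<rightharpoonup> 'a) \<Rightarrow> ('a \<rightharpoonup> 'a)" where
  "sym_pg_mult f1 f = f1 \<circ>\<^sub>m f"

definition sym_pg_le :: "'a topology \<Rightarrow> ('a \<rightharpoonup> 'a) \<Rightarrow> ('a \<rightharpoonup> 'a) \<Rightarrow> bool" where
  "sym_pg_le X f g \<longleftrightarrow> (\<exists>U. openin X U \<and> U \<subseteq> dom g \<and> f = g |` U)"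

definition directed_in :: "('b \<Rightarrow> 'b \<Rightarrow> bool) \<Rightarrow> 'b set \<Rightarrow> 'b set \<Rightarrow> bool" where
  "directed_in le P D \<longleftrightarrow> D \<subseteq> P \<and> D \<noteq> {} \<and>
     (\<forall>x\<in>D. \<forall>y\<in>D. \<exists>z\<in>D. le x z \<and> le y z)"

definition is_sup_in :: "('b \<Rightarrow> 'b \<Rightarrow> bool) \<Rightarrow> 'b set \<Rightarrow> 'b set \<Rightarrow> 'b \<Rightarrow> bool" where
  "is_sup_in le P D s \<longleftrightarrow> s \<in> P \<and> (\<forall>d\<in>D. le d s) \<and>
     (\<forall>u\<in>P. (\<forall>d\<in>D. le d u) \<longrightarrow> le s u)"

definition way_below :: "('b \<Rightarrow> 'b \<Rightarrow> bool) \<Rightarrow> 'b set \<Rightarrow> 'b \<Rightarrow> 'b \<Rightarrow> bool" where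
  "way_below le P x y \<longleftrightarrow>
     (\<forall>D s. directed_in le P D \<longrightarrow> is_sup_in le P D s \<longrightarrow> le y s \<longrightarrow> (\<exists>d\<in>D. le x d))"

definition continuous_poset :: "('b \<Rightarrow> 'b \<Rightarrow> bool) \<Rightarrow> 'b set \<Rightarrow> bool" where
  "continuous_poset le P \<longleftrightarrow>
     (\<forall>s\<in>P. directed_in le P {t\<in>P. way_below le P t s} \<and>
             is_sup_in le P {t\<in>P. way_below le P t s} s)"

end

theory Submission
  imports Defs
begin

(* In I(X) the supremum of a directed family of partial homeomorphisms is their union, so t \<lless> s
   says: every open cover of dom s has finitely many members covering dom t. If X is locally
   compact, the restrictions of s to open sets V \<subseteq> K \<subseteq> dom s with K compact are therefore way
   below s, they form a directed family, and they exhaust s. Conversely, if I(X) is continuous,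
   then around a point x we find u \<lless> t \<lless> id_X with x \<in> dom u; Hausdorffness turns the cover
   condition for u \<lless> t into closure (dom u) \<subseteq> dom t, and the cover condition for t \<lless> id_X
   makes every closed subset of dom t compact. *)

lemma directed_in_finite_upper_bound:
  assumes D: "directed_in le P D" and trans: "transp le"
    and F: "finite F" "F \<subseteq> D"
  shows "\<exists>d\<in>D. \<forall>f\<in>F. le f d"
  using F
proof (induction F rule: finite_induct)
  case empty
  then show ?case
    using D by (auto simp: directed_in_def)
next
  case (insert x F)
  then obtain d where d: "d \<in> D" "\<forall>f\<in>F. le f d"
    by auto
  obtain z where z: "z \<in> D" "le x z" "le d z"
    using D d(1) insert.prems unfolding directed_in_def by blast
  have "le f z" if "f \<in> F" for f
    using transpD[OF trans _ z(3)] d(2) that by blast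
  then show ?case
    using z(1,2) by blast
qed

lemma directed_sup_way_below_setI:
  assumes trans: "transp le" and refl: "le s s"
    and Q_directed: "directed_in le P Q" and Q_sup: "is_sup_in le P Q s"
    and Q_way_below: "\<And>q. q \<in> Q \<Longrightarrow> way_below le P q s"
  shows "directed_in le P {t\<in>P. way_below le P t s} \<and> is_sup_in le P {t\<in>P. way_below le P t s} s"
proof -
  define W where "W = {t\<in>P. way_below le P t s}"
  have below_Q: "\<exists>q\<in>Q. le t q" if "t \<in> W" for t
    using that Q_directed Q_sup refl unfolding W_def way_below_def by blast
  have Q_W: "Q \<subseteq> W"
    using Q_directed Q_way_below unfolding W_def directed_in_def by blast
  have "directed_in le P W"
    unfolding directed_in_def
  proof (intro conjI ballI)
    show "W \<subseteq> P" "W \<noteq> {}"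
      using Q_W Q_directed unfolding W_def directed_in_def by auto
    fix a b assume "a \<in> W" "b \<in> W"
    then obtain qa qb where qa: "qa \<in> Q" "le a qa" and qb: "qb \<in> Q" "le b qb"
      using below_Q by blast
    then obtain z where z: "z \<in> Q" "le qa z" "le qb z"
      using Q_directed unfolding directed_in_def by blast
    have "le a z" "le b z"
      using transpD[OF trans] qa(2) qb(2) z(2,3) by blast+
    then show "\<exists>z\<in>W. le a z \<and> le b z"
      using Q_W z(1) by blast
  qed
  moreover have "is_sup_in le P W s"
    unfolding is_sup_in_def
  proof (intro conjI ballI impI)
    show "s \<in> P"
      using Q_sup by (simp add: is_sup_in_def)
  next
    fix t assume "t \<in> W"
    then obtain q where "q \<in> Q" "le t q"
      using below_Q by blast
    moreover have "le q s"
      using Q_sup \<open>q \<in> Q\<close> by (simp add: is_sup_in_def)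
    ultimately show "le t s"
      using transpD[OF trans] by blast
  next
    fix u assume "u \<in> P" "\<forall>t\<in>W. le t u"
    then show "le s u"
      using Q_W Q_sup unfolding is_sup_in_def by blast
  qed
  ultimately show ?thesis
    unfolding W_def by blast
qed

abbreviation pg_way_below :: "'a topology \<Rightarrow> ('a \<rightharpoonup> 'a) \<Rightarrow> ('a \<rightharpoonup> 'a) \<Rightarrow> bool" where
  "pg_way_below X \<equiv> way_below (sym_pg_le X) (sym_pseudogroup X)"

lemma sym_pg_le_iff:
  "sym_pg_le X f g \<longleftrightarrow> openin X (dom f) \<and> dom f \<subseteq> dom g \<and> (\<forall>x\<in>dom f. f x = g x)"
proof
  assume "sym_pg_le X f g"
  then obtain U where "openin X U" "U \<subseteq> dom g" "f = g |` U"
    unfolding sym_pg_le_def by blast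
  then show "openin X (dom f) \<and> dom f \<subseteq> dom g \<and> (\<forall>x\<in>dom f. f x = g x)"
    by (simp add: Int_absorb1)
next
  assume "openin X (dom f) \<and> dom f \<subseteq> dom g \<and> (\<forall>x\<in>dom f. f x = g x)"
  then have "openin X (dom f) \<and> dom f \<subseteq> dom g \<and> f = g |` dom f"
    by (auto simp: restrict_map_def fun_eq_iff domIff)
  then show "sym_pg_le X f g"
    unfolding sym_pg_le_def by blast
qed

lemma transp_sym_pg_le: "transp (sym_pg_le X)"
  unfolding transp_def sym_pg_le_iff by (metis subsetD subset_trans)

lemma sym_pg_le_restrict_map: "openin X (dom g) \<Longrightarrow> openin X V \<Longrightarrow> sym_pg_le X (g |` V) g"
  by (auto simp: sym_pg_le_iff Int_commute)

lemma sym_pg_le_restrict_map_mono: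
  "openin X (dom g) \<Longrightarrow> openin X V \<Longrightarrow> V \<subseteq> W \<Longrightarrow> sym_pg_le X (g |` V) (g |` W)"
  by (auto simp: sym_pg_le_iff Int_commute)

lemma openin_dom_sym_pseudogroup: "f \<in> sym_pseudogroup X \<Longrightarrow> openin X (dom f)"
  unfolding sym_pseudogroup_def by auto

lemma sym_pg_le_refl: "f \<in> sym_pseudogroup X \<Longrightarrow> sym_pg_le X f f"
  by (simp add: sym_pg_le_iff openin_dom_sym_pseudogroup)

lemma restrict_map_in_sym_pseudogroup:
  assumes f: "f \<in> sym_pseudogroup X" and V: "openin X V"
  shows "f |` V \<in> sym_pseudogroup X"
proof -
  let ?f = "\<lambda>x. the (f x)"
  have dom: "openin X (dom f)" and ran: "openin X (ran f)"
    and hom: "homeomorphic_map (subtopology X (dom f)) (subtopology X (ran f)) ?f"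
    using f unfolding sym_pseudogroup_def by auto
  have dom_restrict: "dom (f |` V) = dom f \<inter> V"
    by simp
  have ran_restrict: "ran (f |` V) = ?f ` (dom f \<inter> V)"
    by (force simp: ran_def restrict_map_def)
  have ran_restrict_subset: "ran (f |` V) \<subseteq> ran f"
    by (auto simp: ran_def restrict_map_def)
  have "openin (subtopology X (dom f)) (dom f \<inter> V)"
    by (simp add: V openin_subtopology_Int2)
  then have "openin (subtopology X (ran f)) (?f ` (dom f \<inter> V))"
    using homeomorphic_imp_open_map[OF hom] unfolding open_map_def by blast
  then have open_ran: "openin X (ran (f |` V))"
    using ran ran_restrict openin_trans_full by metis
  have "topspace (subtopology X (dom f)) = dom f" "topspace (subtopology X (ran f)) = ran f"
    using dom ran openin_subset by fastforce+
  then have "homeomorphic_map (subtopology (subtopology X (dom f)) (dom f \<inter> V))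
          (subtopology (subtopology X (ran f)) (?f ` (dom f \<inter> V))) ?f"
    by (intro homeomorphic_map_subtopologies[OF hom]) (auto intro: ranI)
  then have "homeomorphic_map (subtopology X (dom (f |` V))) (subtopology X (ran (f |` V))) ?f"
    using ran_restrict_subset unfolding subtopology_subtopology dom_restrict ran_restrict
    by (simp add: Int_absorb1)
  then have "homeomorphic_map (subtopology X (dom (f |` V))) (subtopology X (ran (f |` V)))
               (\<lambda>x. the ((f |` V) x))"
    by (rule homeomorphic_map_eq) (use dom openin_subset in auto)
  then show ?thesis
    unfolding sym_pseudogroup_def using dom V open_ran by auto
qed

lemma restrict_Some_in_sym_pseudogroup:
  assumes "openin X A"
  shows "Some |` A \<in> sym_pseudogroup X"
proof -
  have dom_id: "dom (Some |` A) = A" and ran_id: "ran (Some |` A) = A"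
    by (auto simp: ran_def restrict_map_def split: if_splits)
  have "homeomorphic_map (subtopology X A) (subtopology X A) (\<lambda>x. the ((Some |` A) x))"
    by (rule homeomorphic_map_eq[of _ _ id]) (use assms openin_subset in auto)
  then show ?thesis
    using assms by (simp add: sym_pseudogroup_def dom_id ran_id)
qed

lemma directed_in_restrictions:
  assumes s: "s \<in> sym_pseudogroup X" and "\<V> \<noteq> {}" and \<V>_open: "\<And>V. V \<in> \<V> \<Longrightarrow> openin X V"
    and \<V>_directed: "\<And>V W. V \<in> \<V> \<Longrightarrow> W \<in> \<V> \<Longrightarrow> \<exists>Z\<in>\<V>. V \<union> W \<subseteq> Z"
  shows "directed_in (sym_pg_le X) (sym_pseudogroup X) ((\<lambda>V. s |` V) ` \<V>)"
  unfolding directed_in_def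
proof (intro conjI ballI)
  show "(\<lambda>V. s |` V) ` \<V> \<subseteq> sym_pseudogroup X" "(\<lambda>V. s |` V) ` \<V> \<noteq> {}"
    using restrict_map_in_sym_pseudogroup[OF s] \<V>_open \<open>\<V> \<noteq> {}\<close> by auto
  fix a b assume "a \<in> (\<lambda>V. s |` V) ` \<V>" "b \<in> (\<lambda>V. s |` V) ` \<V>"
  then obtain V W where "V \<in> \<V>" "W \<in> \<V>" "a = s |` V" "b = s |` W"
    by blast
  moreover obtain Z where "Z \<in> \<V>" "V \<union> W \<subseteq> Z"
    using \<V>_directed calculation(1,2) by blast
  moreover have "sym_pg_le X (s |` V) (s |` Z)" "sym_pg_le X (s |` W) (s |` Z)"
    using sym_pg_le_restrict_map_mono[OF openin_dom_sym_pseudogroup[OF s]] \<V>_open calculation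
    by (meson le_sup_iff)+
  ultimately show "\<exists>z\<in>(\<lambda>V. s |` V) ` \<V>. sym_pg_le X a z \<and> sym_pg_le X b z"
    by blast
qed

lemma is_sup_in_restrictions:
  assumes s: "s \<in> sym_pseudogroup X" and \<V>_open: "\<And>V. V \<in> \<V> \<Longrightarrow> openin X V"
    and cover: "dom s \<subseteq> \<Union>\<V>"
  shows "is_sup_in (sym_pg_le X) (sym_pseudogroup X) ((\<lambda>V. s |` V) ` \<V>) s"
  unfolding is_sup_in_def
proof (intro conjI ballI impI)
  show "s \<in> sym_pseudogroup X"
    by (rule s)
next
  fix d assume "d \<in> (\<lambda>V. s |` V) ` \<V>"
  then show "sym_pg_le X d s"
    using sym_pg_le_restrict_map[OF openin_dom_sym_pseudogroup[OF s]] \<V>_open by blast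
next
  fix u assume ub: "\<forall>d\<in>(\<lambda>V. s |` V) ` \<V>. sym_pg_le X d u"
  have "x \<in> dom u \<and> s x = u x" if x: "x \<in> dom s" for x
  proof -
    obtain V where "V \<in> \<V>" "x \<in> V"
      using cover x by blast
    then have "sym_pg_le X (s |` V) u"
      using ub by blast
    then show ?thesis
      using \<open>x \<in> V\<close> x by (auto simp: sym_pg_le_iff)
  qed
  then show "sym_pg_le X s u"
    using openin_dom_sym_pseudogroup[OF s] by (auto simp: sym_pg_le_iff)
qed

lemma dom_sup_subset_Union_dom:
  assumes D: "D \<subseteq> sym_pseudogroup X" and sup: "is_sup_in (sym_pg_le X) (sym_pseudogroup X) D s"
  shows "dom s \<subseteq> \<Union>(dom ` D)"
proof -
  let ?V = "\<Union>(dom ` D)"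
  have s: "s \<in> sym_pseudogroup X"
    using sup by (simp add: is_sup_in_def)
  have "openin X ?V"
    using D by (auto intro!: openin_Union openin_dom_sym_pseudogroup)
  then have "s |` ?V \<in> sym_pseudogroup X"
    by (rule restrict_map_in_sym_pseudogroup[OF s])
  moreover have "sym_pg_le X d (s |` ?V)" if "d \<in> D" for d
  proof -
    have "sym_pg_le X d s"
      using sup that by (simp add: is_sup_in_def)
    moreover have "dom d \<subseteq> ?V"
      using that by blast
    ultimately show ?thesis
      unfolding sym_pg_le_iff by (auto simp: subset_iff)
  qed
  ultimately have "sym_pg_le X s (s |` ?V)"
    using sup by (simp add: is_sup_in_def)
  then show ?thesis
    by (auto simp: sym_pg_le_iff)
qed

lemma way_below_restrict_map_compactin:
  assumes s: "s \<in> sym_pseudogroup X" and V: "openin X V"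
    and K: "compactin X K" "V \<subseteq> K" "K \<subseteq> dom s"
  shows "pg_way_below X (s |` V) s"
  unfolding way_below_def
proof (intro allI impI)
  fix D s'
  assume D: "directed_in (sym_pg_le X) (sym_pseudogroup X) D"
    and sup: "is_sup_in (sym_pg_le X) (sym_pseudogroup X) D s'" and "sym_pg_le X s s'"
  have D_sub: "D \<subseteq> sym_pseudogroup X"
    using D by (simp add: directed_in_def)
  have "dom s \<subseteq> dom s'"
    using \<open>sym_pg_le X s s'\<close> by (simp add: sym_pg_le_iff)
  then have "K \<subseteq> \<Union>(dom ` D)"
    using K(3) dom_sup_subset_Union_dom[OF D_sub sup] by (meson order_trans)
  moreover have "\<forall>U\<in>dom ` D. openin X U"
    using D_sub by (auto intro: openin_dom_sym_pseudogroup)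
  moreover have "\<forall>\<U>. (\<forall>U\<in>\<U>. openin X U) \<and> K \<subseteq> \<Union>\<U> \<longrightarrow> (\<exists>\<F>. finite \<F> \<and> \<F> \<subseteq> \<U> \<and> K \<subseteq> \<Union>\<F>)"
    using K(1) by (simp add: compactin_def)
  ultimately have "\<exists>\<F>. finite \<F> \<and> \<F> \<subseteq> dom ` D \<and> K \<subseteq> \<Union>\<F>"
    by blast
  then obtain \<F> where "finite \<F>" "\<F> \<subseteq> dom ` D" "K \<subseteq> \<Union>\<F>"
    by blast
  then obtain F where F: "F \<subseteq> D" "finite F" "\<F> = dom ` F"
    by (meson finite_subset_image)
  obtain d where d: "d \<in> D" "\<forall>f\<in>F. sym_pg_le X f d"
    using directed_in_finite_upper_bound[OF D transp_sym_pg_le F(2,1)] by blast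
  have "\<Union>(dom ` F) \<subseteq> dom d"
    using d(2) by (simp add: sym_pg_le_iff UN_subset_iff)
  then have "K \<subseteq> dom d"
    using \<open>K \<subseteq> \<Union>\<F>\<close> F(3) by blast
  moreover have "s x = d x" if "x \<in> K" for x
  proof -
    have "sym_pg_le X d s'"
      using sup d(1) by (simp add: is_sup_in_def)
    moreover have "x \<in> dom d" "x \<in> dom s"
      using that K(3) \<open>K \<subseteq> dom d\<close> by auto
    ultimately show ?thesis
      using \<open>sym_pg_le X s s'\<close> by (simp add: sym_pg_le_iff)
  qed
  moreover have "dom (s |` V) = V"
    using K(2,3) by auto
  ultimately have "sym_pg_le X (s |` V) d"
    using V K(2) unfolding sym_pg_le_iff by auto
  then show "\<exists>d\<in>D. sym_pg_le X (s |` V) d"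
    using d(1) by blast
qed

lemma way_below_finite_subcover:
  assumes s: "s \<in> sym_pseudogroup X" and t: "pg_way_below X t s"
    and \<O>_open: "\<And>B. B \<in> \<O> \<Longrightarrow> openin X B" and cover: "dom s \<subseteq> \<Union>\<O>"
  obtains F where "finite F" "F \<subseteq> \<O>" "dom t \<subseteq> \<Union>F"
proof -
  define \<V> where "\<V> = {\<Union>F | F. finite F \<and> F \<subseteq> \<O>}"
  have \<V>_open: "\<And>V. V \<in> \<V> \<Longrightarrow> openin X V"
    using \<O>_open unfolding \<V>_def by blast
  have \<V>_cover: "dom s \<subseteq> \<Union>\<V>"
  proof
    fix x assume "x \<in> dom s"
    then obtain B where "B \<in> \<O>" "x \<in> B"
      using cover by blast
    then have "\<Union>{B} \<in> \<V>"
      unfolding \<V>_def by blast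
    then show "x \<in> \<Union>\<V>"
      using \<open>x \<in> B\<close> by auto
  qed
  have "directed_in (sym_pg_le X) (sym_pseudogroup X) ((\<lambda>V. s |` V) ` \<V>)"
  proof (rule directed_in_restrictions[OF s _ \<V>_open])
    show "\<V> \<noteq> {}"
      unfolding \<V>_def by blast
  next
    fix V W assume "V \<in> \<V>" "W \<in> \<V>"
    then obtain F G where "finite F" "F \<subseteq> \<O>" "V = \<Union>F" "finite G" "G \<subseteq> \<O>" "W = \<Union>G"
      unfolding \<V>_def by blast
    then have "\<Union>(F \<union> G) \<in> \<V>" "V \<union> W \<subseteq> \<Union>(F \<union> G)"
      unfolding \<V>_def by (auto intro!: exI[of _ "F \<union> G"])
    then show "\<exists>Z\<in>\<V>. V \<union> W \<subseteq> Z"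
      by blast
  qed
  moreover have "is_sup_in (sym_pg_le X) (sym_pseudogroup X) ((\<lambda>V. s |` V) ` \<V>) s"
    using s \<V>_open \<V>_cover by (rule is_sup_in_restrictions)
  ultimately obtain V where "V \<in> \<V>" "sym_pg_le X t (s |` V)"
    using t sym_pg_le_refl[OF s] unfolding way_below_def by blast
  then obtain F where "finite F" "F \<subseteq> \<O>" "dom t \<subseteq> \<Union>F"
    unfolding \<V>_def by (auto simp: sym_pg_le_iff)
  then show thesis
    by (rule that)
qed

lemma closure_of_dom_subset_if_way_below:
  assumes X: "Hausdorff_space X" and s: "s \<in> sym_pseudogroup X" and t: "pg_way_below X t s"
  shows "X closure_of dom t \<subseteq> dom s"
proof
  fix y assume y: "y \<in> X closure_of dom t"
  show "y \<in> dom s"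
  proof (rule ccontr)
    assume "y \<notin> dom s"
    define \<O> where "\<O> = {B. openin X B \<and> y \<notin> X closure_of B}"
    have \<O>_open: "\<And>B. B \<in> \<O> \<Longrightarrow> openin X B"
      unfolding \<O>_def by blast
    have \<O>_cover: "dom s \<subseteq> \<Union>\<O>"
    proof
      fix z assume "z \<in> dom s"
      then have "z \<in> topspace X" "z \<noteq> y"
        using openin_subset[OF openin_dom_sym_pseudogroup[OF s]] \<open>y \<notin> dom s\<close> by auto
      moreover have "y \<in> topspace X"
        using y by (simp add: in_closure_of)
      ultimately obtain B N where "openin X B" "openin X N" "z \<in> B" "y \<in> N" "disjnt B N"
        using X unfolding Hausdorff_space_def by blast
      then have "y \<notin> X closure_of B"
        by (meson disjnt_iff in_closure_of)
      then show "z \<in> \<Union>\<O>"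
        using \<open>openin X B\<close> \<open>z \<in> B\<close> unfolding \<O>_def by blast
    qed
    obtain F where F: "finite F" "F \<subseteq> \<O>" "dom t \<subseteq> \<Union>F"
      using s t \<O>_open \<O>_cover by (rule way_below_finite_subcover)
    have "X closure_of dom t \<subseteq> X closure_of \<Union>F"
      using F(3) by (rule closure_of_mono)
    also have "\<dots> = (\<Union>B\<in>F. X closure_of B)"
      using F(1) by (rule closure_of_Union)
    finally obtain B where "B \<in> F" "y \<in> X closure_of B"
      using y by blast
    then show False
      using F(2) unfolding \<O>_def by blast
  qed
qed

lemma compactin_if_closedin_subset_way_below:
  assumes s: "s \<in> sym_pseudogroup X" and t: "pg_way_below X t s"
    and K: "closedin X K" "K \<subseteq> dom t"
  shows "compactin X K"
  unfolding compactin_def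
proof (intro conjI allI impI)
  show "K \<subseteq> topspace X"
    using K(1) by (rule closedin_subset)
next
  fix \<U> assume \<U>: "(\<forall>U\<in>\<U>. openin X U) \<and> K \<subseteq> \<Union>\<U>"
  let ?C = "topspace X - K"
  have "openin X ?C"
    using K(1) by (rule openin_diff[OF openin_topspace])
  then have C_open: "\<And>B. B \<in> insert ?C \<U> \<Longrightarrow> openin X B"
    using \<U> by blast
  have "dom s \<subseteq> topspace X"
    using openin_dom_sym_pseudogroup[OF s] by (rule openin_subset)
  then have C_cover: "dom s \<subseteq> \<Union>(insert ?C \<U>)"
    using \<U> by blast
  obtain F where F: "finite F" "F \<subseteq> insert ?C \<U>" "dom t \<subseteq> \<Union>F"
    using s t C_open C_cover by (rule way_below_finite_subcover)
  have "K \<subseteq> \<Union>(F - {?C})"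
  proof
    fix z assume "z \<in> K"
    then obtain B where "B \<in> F" "z \<in> B"
      using F(3) K(2) by blast
    moreover have "B \<noteq> ?C"
      using \<open>z \<in> K\<close> \<open>z \<in> B\<close> by blast
    ultimately show "z \<in> \<Union>(F - {?C})"
      by blast
  qed
  moreover have "finite (F - {?C})" "F - {?C} \<subseteq> \<U>"
    using F(1,2) by auto
  ultimately show "\<exists>\<F>. finite \<F> \<and> \<F> \<subseteq> \<U> \<and> K \<subseteq> \<Union>\<F>"
    by blast
qed

lemma continuous_poset_way_below_cover:
  assumes C: "continuous_poset (sym_pg_le X) (sym_pseudogroup X)"
    and s: "s \<in> sym_pseudogroup X" and x: "x \<in> dom s"
  obtains t where "t \<in> sym_pseudogroup X" "pg_way_below X t s" "x \<in> dom t"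
proof -
  let ?W = "{t\<in>sym_pseudogroup X. pg_way_below X t s}"
  have "?W \<subseteq> sym_pseudogroup X"
    by blast
  moreover have "is_sup_in (sym_pg_le X) (sym_pseudogroup X) ?W s"
    using bspec[OF C[unfolded continuous_poset_def] s] by (rule conjunct2)
  ultimately have "dom s \<subseteq> \<Union>(dom ` ?W)"
    by (rule dom_sup_subset_Union_dom)
  then obtain t where "t \<in> ?W" "x \<in> dom t"
    using x by blast
  then show thesis
    using that by blast
qed

lemma sym_pseudogroup_continuous_if_locally_compact:
  assumes X: "Hausdorff_space X" "locally_compact_space X"
  shows "continuous_poset (sym_pg_le X) (sym_pseudogroup X)"
  unfolding continuous_poset_def
proof
  fix s assume s: "s \<in> sym_pseudogroup X"
  define \<V> where "\<V> = {V. openin X V \<and> (\<exists>K. compactin X K \<and> V \<subseteq> K \<and> K \<subseteq> dom s)}"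
  have \<V>_open: "\<And>V. V \<in> \<V> \<Longrightarrow> openin X V"
    unfolding \<V>_def by blast
  have \<V>_cover: "dom s \<subseteq> \<Union>\<V>"
  proof
    fix x assume "x \<in> dom s"
    have "neighbourhood_base_of (compactin X) X"
      using X locally_compact_space_neighbourhood_base by blast
    then have "\<exists>U K. openin X U \<and> compactin X K \<and> x \<in> U \<and> U \<subseteq> K \<and> K \<subseteq> dom s"
      using openin_dom_sym_pseudogroup[OF s] \<open>x \<in> dom s\<close> unfolding neighbourhood_base_of by blast
    then show "x \<in> \<Union>\<V>"
      unfolding \<V>_def by blast
  qed
  have "directed_in (sym_pg_le X) (sym_pseudogroup X) ((\<lambda>V. s |` V) ` \<V>)"
  proof (rule directed_in_restrictions[OF s _ \<V>_open])
    have "{} \<in> \<V>"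
      unfolding \<V>_def by (intro CollectI conjI exI[of _ "{}"]) auto
    then show "\<V> \<noteq> {}"
      by blast
  next
    fix V W assume "V \<in> \<V>" "W \<in> \<V>"
    then obtain K L where "openin X V" "compactin X K" "V \<subseteq> K" "K \<subseteq> dom s"
      and "openin X W" "compactin X L" "W \<subseteq> L" "L \<subseteq> dom s"
      unfolding \<V>_def by blast
    then have "V \<union> W \<in> \<V>"
      unfolding \<V>_def by (intro CollectI conjI openin_Un exI[of _ "K \<union> L"] compactin_Un) auto
    then show "\<exists>Z\<in>\<V>. V \<union> W \<subseteq> Z"
      by blast
  qed
  moreover have "is_sup_in (sym_pg_le X) (sym_pseudogroup X) ((\<lambda>V. s |` V) ` \<V>) s"
    using s \<V>_open \<V>_cover by (rule is_sup_in_restrictions)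
  moreover have "\<And>q. q \<in> (\<lambda>V. s |` V) ` \<V> \<Longrightarrow> pg_way_below X q s"
    using way_below_restrict_map_compactin[OF s] unfolding \<V>_def by blast
  ultimately show "directed_in (sym_pg_le X) (sym_pseudogroup X) {t\<in>sym_pseudogroup X. pg_way_below X t s}
    \<and> is_sup_in (sym_pg_le X) (sym_pseudogroup X) {t\<in>sym_pseudogroup X. pg_way_below X t s} s"
    by (rule directed_sup_way_below_setI[where le = "sym_pg_le X", OF transp_sym_pg_le sym_pg_le_refl[OF s]])
qed

lemma locally_compact_if_sym_pseudogroup_continuous:
  assumes X: "Hausdorff_space X" and C: "continuous_poset (sym_pg_le X) (sym_pseudogroup X)"
  shows "locally_compact_space X"
  unfolding locally_compact_space_compact_closure_of[OF disjI1[OF X]]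
proof
  fix x assume "x \<in> topspace X"
  have id: "Some |` topspace X \<in> sym_pseudogroup X"
    by (simp add: restrict_Some_in_sym_pseudogroup)
  obtain t where t: "t \<in> sym_pseudogroup X" "pg_way_below X t (Some |` topspace X)" "x \<in> dom t"
    using continuous_poset_way_below_cover[OF C id] \<open>x \<in> topspace X\<close> by auto
  obtain u where u: "u \<in> sym_pseudogroup X" "pg_way_below X u t" "x \<in> dom u"
    using continuous_poset_way_below_cover[OF C t(1,3)] by blast
  have "compactin X (X closure_of dom u)"
    using compactin_if_closedin_subset_way_below[OF id t(2)]
      closure_of_dom_subset_if_way_below[OF X t(1) u(2)] by simp
  then show "\<exists>U. openin X U \<and> compactin X (X closure_of U) \<and> x \<in> U"
    using openin_dom_sym_pseudogroup[OF u(1)] u(3) by blast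
qed

theorem corollary5p11:
  fixes X :: "'a topology"
  assumes "Hausdorff_space X"
  shows "locally_compact_space X \<longleftrightarrow>
         continuous_poset (sym_pg_le X) (sym_pseudogroup X)"
  using assms sym_pseudogroup_continuous_if_locally_compact
    locally_compact_if_sym_pseudogroup_continuous by blast

end
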